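(* Let $\theta^*\in\mathbb{R}^n$, $\sigma>0$, $Y\sim N(\theta^*,\sigma^2I_n)$, and $\hat\theta(Y)=\Pi_{\mathcal{C}}(Y)$ for a nonempty closed convex set $\mathcal{C}$. (1) If $\mathcal{C}=\mathbb{R}^n_+=\{u:u_i\ge0\ \forall i\}$, then $\lim_{\sigma\to\infty}\sigma^{-2}M(\hat\theta,\theta^* )=\lim_{\sigma\to\infty}\sigma^{-2}E(\hat\theta,\theta^* )=n/2$. (2) For a general nonempty closed convex $\mathcal{C}$, $K_{\mathcal{C}}=\{0\}$ if and only if $\mathcal{C}$ is bounded, and in that case $\lim_{\sigma\to\infty}\sigma^{-2}M(\hat\theta,\theta^* )=\lim_{\sigma\to\infty}\sigma^{-2}E(\hat\theta,\theta^* )=0$.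
   Context: $\Pi_{\mathcal{C}}$ is Euclidean projection; $T_{\mathcal{C}}(\theta_0)=\mathrm{cl}\{\alpha(\theta-\theta_0):\alpha\ge0,\theta\in\mathcal{C}\}$ is the tangent cone and $K_{\mathcal{C}}=\bigcap_{\theta\in\mathcal{C}}T_{\mathcal{C}}(\theta)$ is the core cone. Misspecified risk: $M(\hat\theta,\theta^* )=\mathbb{E}\|\hat\theta(Y)-\Pi_{\mathcal{C}}(\theta^* )\|^2$; excess risk: $E(\hat\theta,\theta^* )=\mathbb{E}\|\hat\theta(Y)-\theta^*\|^2-\|\Pi_{\mathcal{C}}(\theta^* )-\theta^*\|^2$. *)

theory Defs
  imports "HOL-Analysis.Analysis"
begin

abbreviation proj :: "(real ^ 'n) set \<Rightarrow> real ^ 'n \<Rightarrow> real ^ 'n" where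
  "proj C y \<equiv> closest_point C y"

definition tangent_cone :: "(real ^ 'n) set \<Rightarrow> real ^ 'n \<Rightarrow> (real ^ 'n) set" where
  "tangent_cone C \<theta>0 = closure {\<alpha> *\<^sub>R (\<theta> - \<theta>0) | \<alpha> \<theta>. \<alpha> \<ge> 0 \<and> \<theta> \<in> C}"

definition core_cone :: "(real ^ 'n) set \<Rightarrow> (real ^ 'n) set" where
  "core_cone C = (\<Inter>\<theta>\<in>C. tangent_cone C \<theta>)"

definition std_gauss_density :: "real ^ 'n \<Rightarrow> real" where
  "std_gauss_density z = (2 * pi) powr (- real CARD('n) / 2) * exp (- (norm z)\<^sup>2 / 2)"

text \<open>E f(Y) for Y ~ N(theta, sigma^2 I_n), written as Y = theta + sigma Z, Z ~ N(0, I_n).\<close>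
definition gauss_expect :: "real ^ 'n \<Rightarrow> real \<Rightarrow> (real ^ 'n \<Rightarrow> real) \<Rightarrow> real" where
  "gauss_expect \<theta> \<sigma> f = (\<integral>z. f (\<theta> + \<sigma> *\<^sub>R z) * std_gauss_density z \<partial>lborel)"

definition misspec_risk :: "(real ^ 'n) set \<Rightarrow> real ^ 'n \<Rightarrow> real \<Rightarrow> real" where
  "misspec_risk C \<theta>s \<sigma> = gauss_expect \<theta>s \<sigma> (\<lambda>y. (norm (proj C y - proj C \<theta>s))\<^sup>2)"

definition excess_risk :: "(real ^ 'n) set \<Rightarrow> real ^ 'n \<Rightarrow> real \<Rightarrow> real" where
  "excess_risk C \<theta>s \<sigma> = gauss_expect \<theta>s \<sigma> (\<lambda>y. (norm (proj C y - \<theta>s))\<^sup>2)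
      - (norm (proj C \<theta>s - \<theta>s))\<^sup>2"

definition nonneg_orthant :: "(real ^ 'n) set" where
  "nonneg_orthant = {u. \<forall>i. u $ i \<ge> 0}"

end

theory Submission
  imports Defs "HOL-Probability.Distributions"
begin

text \<open>For a closed convex cone \<open>K\<close> the projection is positively homogeneous, so with
\<open>Y = \<theta> + \<sigma> Z\<close> we get \<open>(\<Pi>\<^sub>K Y - u) / \<sigma> = \<Pi>\<^sub>K (\<theta> / \<sigma> + Z) - u / \<sigma> \<longrightarrow> \<Pi>\<^sub>K Z\<close>; since
\<open>|\<Pi>\<^sub>K x| \<le> |x|\<close>, dominated convergence yields \<open>E |\<Pi>\<^sub>K Y - u|\<^sup>2 / \<sigma>\<^sup>2 \<longrightarrow> E |\<Pi>\<^sub>K Z|\<^sup>2\<close>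
for every fixed \<open>u\<close>. For the orthant \<open>\<Pi>\<^sub>K Z = (max Z\<^sub>i 0)\<^sub>i\<close>, and each coordinate contributes
\<open>E (max Z\<^sub>i 0)\<^sup>2 = 1/2\<close> by symmetry of the normal law. For bounded \<open>C\<close> both risks are bounded
in \<open>\<sigma>\<close>, hence vanish after division by \<open>\<sigma>\<^sup>2\<close>.

A bounded \<open>C\<close> has trivial core cone: if \<open>\<theta>\<close> maximises \<open>\<langle>v, -\<rangle>\<close> on \<open>C\<close>, the tangent cone at \<open>\<theta>\<close>
lies in \<open>\<langle>v, -\<rangle> \<le> 0\<close>, so \<open>v\<close> in it forces \<open>v = 0\<close>. For unbounded \<open>C\<close>, any limit point of the
directions \<open>x\<^sub>k / |x\<^sub>k|\<close> with \<open>x\<^sub>k \<in> C\<close>, \<open>|x\<^sub>k| \<longrightarrow> \<infinity>\<close> is a unit vector in every tangent cone.\<close>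

lemma power2_norm_eq_sum_Basis: "(norm (x::'a::euclidean_space))\<^sup>2 = (\<Sum>b\<in>Basis. (x \<bullet> b)\<^sup>2)"
  unfolding power2_norm_eq_inner by (subst euclidean_inner) (simp add: power2_eq_square)

lemma std_gauss_density_eq_prod:
  "std_gauss_density (z::real^'n) = (\<Prod>b\<in>Basis. std_normal_density (z \<bullet> b))"
proof -
  have "(\<Prod>b\<in>Basis. std_normal_density (z \<bullet> b))
      = (1 / sqrt (2*pi)) ^ CARD('n) * exp (\<Sum>b\<in>Basis. - (z \<bullet> b)\<^sup>2 / 2)"
    unfolding std_normal_density_def prod.distrib prod_constant by (simp add: exp_sum)
  also have "(\<Sum>b\<in>Basis. - (z \<bullet> b)\<^sup>2 / 2) = - (norm z)\<^sup>2 / 2"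
    by (simp add: power2_norm_eq_sum_Basis sum_negf sum_divide_distrib)
  also have "(1 / sqrt (2*pi)) ^ CARD('n) = (2 * pi) powr (- real CARD('n) / 2)"
  proof -
    have "(1 / sqrt (2*pi)) ^ CARD('n) = ((2*pi) powr (-1/2)) ^ CARD('n)"
      by (simp add: powr_half_sqrt[symmetric] powr_minus_divide)
    also have "\<dots> = (2 * pi) powr (- real CARD('n) / 2)"
      by (subst powr_realpow[symmetric]) (simp_all add: powr_powr)
    finally show ?thesis .
  qed
  finally show ?thesis by (simp add: std_gauss_density_def)
qed

lemma std_gauss_density_nonneg: "0 \<le> std_gauss_density z"
  unfolding std_gauss_density_def by simp

lemma borel_measurable_std_gauss_density [measurable]: "std_gauss_density \<in> borel_measurable borel"
  unfolding std_gauss_density_def[abs_def] by measurable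

lemma has_bochner_integral_std_gauss_coordinate:
  fixes b0 :: "real^'n" and h :: "real \<Rightarrow> real"
  assumes b0: "b0 \<in> Basis" and [measurable]: "h \<in> borel_measurable borel" and h_nonneg: "\<And>t. 0 \<le> h t"
    and h_int: "has_bochner_integral lborel (\<lambda>t. std_normal_density t * h t) I"
  shows "has_bochner_integral lborel (\<lambda>z::real^'n. h (z \<bullet> b0) * std_gauss_density z) I"
proof -
  define f where "f b = (if b = b0 then (\<lambda>t. std_normal_density t * h t) else std_normal_density)"
    for b :: "real^'n"
  define J where "J b = (if b = b0 then I else 1)" for b :: "real^'n"
  have f_nonneg: "0 \<le> f b t" for b t using h_nonneg by (simp add: f_def)
  have [measurable]: "f b \<in> borel_measurable borel" for b by (simp add: f_def)
  have remove_b0: "(\<Prod>b\<in>Basis. g b) = g b0 * (\<Prod>b\<in>Basis - {b0}. g b)" for g :: "real^'n \<Rightarrow> real"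
    using prod.remove[OF finite_Basis b0] .
  have integrand: "h (z \<bullet> b0) * std_gauss_density z = (\<Prod>b\<in>Basis. f b (z \<bullet> b))" for z :: "real^'n"
  proof -
    have "(\<Prod>b\<in>Basis - {b0}. f b (z \<bullet> b)) = (\<Prod>b\<in>Basis - {b0}. std_normal_density (z \<bullet> b))"
      by (intro prod.cong) (auto simp: f_def)
    then show ?thesis unfolding std_gauss_density_eq_prod remove_b0 by (simp add: f_def)
  qed
  have I: "integral\<^sup>L lborel (\<lambda>t. std_normal_density t * h t) = I"
    and h_integrable: "integrable lborel (\<lambda>t. std_normal_density t * h t)"
    using h_int by (auto simp: has_bochner_integral_iff)
  have I_nonneg: "0 \<le> I" unfolding I[symmetric] by (rule integral_nonneg_AE) (simp add: h_nonneg)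
  have factor: "(\<integral>\<^sup>+t. ennreal (f b t) \<partial>lborel) = ennreal (J b)" for b
  proof (cases "b = b0")
    case True then show ?thesis
      using nn_integral_eq_integral[OF h_integrable] h_nonneg I by (simp add: f_def J_def)
  next
    case False
    have "(\<integral>\<^sup>+t. ennreal (normal_density 0 1 t) \<partial>lborel) = ennreal (integral\<^sup>L lborel (normal_density 0 1))"
      by (rule nn_integral_eq_integral[OF integrable_normal_density]) (auto intro!: AE_I2 normal_density_nonneg)
    with False show ?thesis by (simp add: f_def J_def)
  qed
  have "(\<integral>\<^sup>+z. ennreal (h (z \<bullet> b0) * std_gauss_density z) \<partial>lborel)
      = (\<integral>\<^sup>+z. (\<Prod>b\<in>Basis. ennreal (f b (z \<bullet> b))) \<partial>lborel)"
    unfolding integrand by (simp add: prod_ennreal f_nonneg)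
  also have "\<dots> = (\<Prod>b\<in>Basis. (\<integral>\<^sup>+t. ennreal (f b t) \<partial>lborel))"
    by (rule nn_integral_lborel_prod) auto
  also have "\<dots> = ennreal I"
    by (simp add: factor prod_ennreal J_def I_nonneg remove_b0)
  finally show ?thesis
    by (intro has_bochner_integral_nn_integral) (auto simp: h_nonneg std_gauss_density_nonneg I_nonneg)
qed

lemma has_bochner_integral_std_gauss_density:
  "has_bochner_integral lborel (std_gauss_density :: real^'n \<Rightarrow> real) 1"
proof -
  have "has_bochner_integral lborel (\<lambda>t. std_normal_density t * 1) 1"
    using integrable_normal_density[of 0 1] integral_normal_density[of 0 1]
    by (simp add: has_bochner_integral_iff)
  from has_bochner_integral_std_gauss_coordinate[OF SOME_Basis _ _ this] show ?thesis by simp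
qed

lemma has_bochner_integral_std_gauss_norm_sq:
  "has_bochner_integral lborel (\<lambda>z::real^'n. (norm z)\<^sup>2 * std_gauss_density z) (real CARD('n))"
proof -
  have "has_bochner_integral lborel (\<lambda>t. std_normal_density t * t\<^sup>2) 1"
    using std_normal_moment_even[of 1] by simp
  then have "has_bochner_integral lborel (\<lambda>z::real^'n. \<Sum>b\<in>Basis. (z \<bullet> b)\<^sup>2 * std_gauss_density z)
      (\<Sum>b\<in>(Basis::(real^'n) set). 1)"
    by (intro has_bochner_integral_sum has_bochner_integral_std_gauss_coordinate) auto
  then show ?thesis by (simp add: power2_norm_eq_sum_Basis sum_distrib_right)
qed

lemma has_bochner_integral_std_normal_positive_part_sq:
  "has_bochner_integral lborel (\<lambda>t. std_normal_density t * (max t 0)\<^sup>2) (1/2)"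
proof -
  let ?pos = "\<lambda>t::real. std_normal_density t * (max t 0)\<^sup>2"
  let ?neg = "\<lambda>t::real. std_normal_density t * (max (-t) 0)\<^sup>2"
  have sq_int: "integrable lborel (\<lambda>t. std_normal_density t * t\<^sup>2)"
    by (rule integrable_std_normal_moment)
  have sq_val: "integral\<^sup>L lborel (\<lambda>t. std_normal_density t * t\<^sup>2) = 1"
    using integral_std_normal_moment_even[of 1] by simp
  have split: "?pos t + ?neg t = std_normal_density t * t\<^sup>2" for t
    by (cases "t \<ge> 0") (auto simp: algebra_simps max_def)
  have nonneg: "0 \<le> ?pos t" "0 \<le> ?neg t" for t by (simp_all add: normal_density_nonneg)
  have pos_int: "integrable lborel ?pos" and neg_int: "integrable lborel ?neg"
    by (rule Bochner_Integration.integrable_bound[OF sq_int],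
        auto intro!: AE_I2 simp: nonneg normal_density_nonneg split[symmetric])+
  have "integral\<^sup>L lborel ?pos = integral\<^sup>L lborel ?neg"
    using lborel_integral_real_affine[of "-1" ?pos 0] by (simp add: std_normal_density_def)
  moreover have "integral\<^sup>L lborel ?pos + integral\<^sup>L lborel ?neg = 1"
    using Bochner_Integration.integral_add[OF pos_int neg_int] split sq_val by simp
  ultimately show ?thesis using pos_int by (simp add: has_bochner_integral_iff)
qed

lemma tendsto_divide_power2_at_top: "((\<lambda>s::real. c / s\<^sup>2) \<longlongrightarrow> 0) at_top"
  by (rule tendsto_divide_0[OF tendsto_const filterlim_at_top_imp_at_infinity])
     (auto intro: filterlim_pow_at_top filterlim_ident)

lemma abs_gauss_expect_le:
  assumes [measurable]: "h \<in> borel_measurable borel" and bound: "\<And>y. \<bar>h y\<bar> \<le> K"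
  shows "\<bar>gauss_expect (\<theta>::real^'n) \<sigma> h\<bar> \<le> K"
proof -
  have K_nonneg: "0 \<le> K" using bound[of 0] by linarith
  have density_int: "integrable lborel (\<lambda>z::real^'n. K * std_gauss_density z)"
    using has_bochner_integral_std_gauss_density by (auto simp: has_bochner_integral_iff)
  have pointwise: "\<bar>h (\<theta> + \<sigma> *\<^sub>R z) * std_gauss_density z\<bar> \<le> K * std_gauss_density z" for z
    by (simp add: abs_mult std_gauss_density_nonneg bound mult_right_mono)
  have h_int: "integrable lborel (\<lambda>z. h (\<theta> + \<sigma> *\<^sub>R z) * std_gauss_density z)"
    using pointwise by (intro Bochner_Integration.integrable_bound[OF density_int] AE_I2)
      (auto simp: abs_of_nonneg K_nonneg std_gauss_density_nonneg)
  have "\<bar>gauss_expect \<theta> \<sigma> h\<bar> \<le> (\<integral>z. K * std_gauss_density (z::real^'n) \<partial>lborel)"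
    unfolding gauss_expect_def
    by (rule integral_abs_bound_integral[OF h_int density_int]) (use pointwise in auto)
  also have "\<dots> = K"
    using has_bochner_integral_std_gauss_density[where 'n='n] by (simp add: has_bochner_integral_iff)
  finally show ?thesis .
qed

lemma gauss_expect_bounded_divide_power2_tendsto_0:
  assumes "h \<in> borel_measurable borel" and "\<And>y. \<bar>h y\<bar> \<le> K"
  shows "((\<lambda>\<sigma>. gauss_expect \<theta> \<sigma> h / \<sigma>\<^sup>2) \<longlongrightarrow> 0) at_top"
proof (rule Lim_null_comparison[OF always_eventually tendsto_divide_power2_at_top])
  show "\<forall>\<sigma>. norm (gauss_expect \<theta> \<sigma> h / \<sigma>\<^sup>2) \<le> K / \<sigma>\<^sup>2"
    using abs_gauss_expect_le[OF assms] by (simp add: divide_right_mono)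
qed

lemma closest_point_scaleR_convex_cone:
  fixes K :: "'a::euclidean_space set"
  assumes cone: "convex_cone K" and closed: "closed K" and c: "0 < c"
  shows "closest_point K (c *\<^sub>R x) = c *\<^sub>R closest_point K x"
proof -
  have K: "K \<noteq> {}" "convex K" using cone by (auto simp: convex_cone_def)
  let ?p = "closest_point K x"
  have in_K: "c *\<^sub>R ?p \<in> K"
    using convex_cone_scaleR[OF cone] closest_point_in_set[OF closed K(1)] c by simp
  have "dist (c *\<^sub>R x) (c *\<^sub>R ?p) \<le> dist (c *\<^sub>R x) y" if y: "y \<in> K" for y
  proof -
    have "inverse c *\<^sub>R y \<in> K" using convex_cone_scaleR[OF cone _ y] c by simp
    then have "c * dist x ?p \<le> c * dist x (inverse c *\<^sub>R y)"
      using closest_point_le[OF closed] c by (simp add: mult_left_mono)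
    also have "\<dots> = norm (c *\<^sub>R (x - inverse c *\<^sub>R y))"
      using c by (simp add: dist_norm)
    also have "\<dots> = dist (c *\<^sub>R x) y"
      using c by (simp add: dist_norm scaleR_right_diff_distrib)
    finally show ?thesis
      using c by (simp add: dist_norm flip: scaleR_right_diff_distrib)
  qed
  then show ?thesis by (intro closest_point_unique[symmetric, OF K(2) closed in_K]) auto
qed

lemma norm_closest_point_convex_cone_le:
  fixes K :: "'a::euclidean_space set"
  assumes "convex_cone K" and "closed K"
  shows "norm (closest_point K x) \<le> norm x"
proof -
  have "closest_point K 0 = 0" by (rule closest_point_self[OF convex_cone_contains_0[OF assms(1)]])
  then show ?thesis
    using closest_point_lipschitz[of K x 0] assms by (auto simp: convex_cone_def dist_norm)
qed

lemma borel_measurable_closest_point [measurable]: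
  fixes K :: "'a::euclidean_space set"
  assumes "convex K" and "closed K" and "K \<noteq> {}"
  shows "closest_point K \<in> borel_measurable borel"
  using assms by (intro borel_measurable_continuous_onI continuous_on_closest_point)

context
  fixes K :: "'a::euclidean_space set"
  assumes cone: "convex_cone K" and closed: "closed K"
begin

lemma scaled_residual_closest_point_convex_cone:
  assumes "0 < \<sigma>"
  shows "(norm (closest_point K (\<theta> + \<sigma> *\<^sub>R z) - u))\<^sup>2 / \<sigma>\<^sup>2
       = (norm (closest_point K (inverse \<sigma> *\<^sub>R \<theta> + z) - inverse \<sigma> *\<^sub>R u))\<^sup>2"
proof -
  have "\<theta> + \<sigma> *\<^sub>R z = \<sigma> *\<^sub>R (inverse \<sigma> *\<^sub>R \<theta> + z)"
    using assms by (simp add: scaleR_add_right)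
  then have "closest_point K (\<theta> + \<sigma> *\<^sub>R z) = \<sigma> *\<^sub>R closest_point K (inverse \<sigma> *\<^sub>R \<theta> + z)"
    using closest_point_scaleR_convex_cone[OF cone closed assms] by simp
  then have "closest_point K (\<theta> + \<sigma> *\<^sub>R z) - u
      = \<sigma> *\<^sub>R (closest_point K (inverse \<sigma> *\<^sub>R \<theta> + z) - inverse \<sigma> *\<^sub>R u)"
    using assms by (simp add: algebra_simps)
  then show ?thesis
    using assms by (simp add: power_mult_distrib)
qed

lemma scaled_residual_closest_point_convex_cone_le:
  assumes "1 \<le> \<sigma>"
  shows "(norm (closest_point K (\<theta> + \<sigma> *\<^sub>R z) - u))\<^sup>2 / \<sigma>\<^sup>2
       \<le> 2 * (norm z)\<^sup>2 + 2 * (norm \<theta> + norm u)\<^sup>2"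
proof -
  have inv: "0 < inverse \<sigma>" "inverse \<sigma> \<le> 1" using assms by (auto simp: inverse_le_1_iff)
  have "norm (closest_point K (inverse \<sigma> *\<^sub>R \<theta> + z) - inverse \<sigma> *\<^sub>R u)
      \<le> norm (inverse \<sigma> *\<^sub>R \<theta> + z) + inverse \<sigma> * norm u"
    using norm_closest_point_convex_cone_le[OF cone closed] norm_triangle_ineq4 inv
    by (smt (verit) norm_scaleR)
  also have "\<dots> \<le> norm z + (norm \<theta> + norm u)"
    using norm_triangle_ineq[of "inverse \<sigma> *\<^sub>R \<theta>" z] inv
    by (smt (verit) mult_left_le_one_le norm_ge_zero norm_scaleR)
  finally have "(norm (closest_point K (inverse \<sigma> *\<^sub>R \<theta> + z) - inverse \<sigma> *\<^sub>R u))\<^sup>2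
      \<le> (norm z + (norm \<theta> + norm u))\<^sup>2"
    by (simp add: power_mono)
  also have "\<dots> \<le> 2 * (norm z)\<^sup>2 + 2 * (norm \<theta> + norm u)\<^sup>2"
    by (smt (verit) sum_squares_bound[of "norm z" "norm \<theta> + norm u"] power2_sum)
  finally show ?thesis
    using scaled_residual_closest_point_convex_cone assms by simp
qed

lemma scaled_residual_closest_point_convex_cone_tendsto:
  "((\<lambda>\<sigma>. (norm (closest_point K (\<theta> + \<sigma> *\<^sub>R z) - u))\<^sup>2 / \<sigma>\<^sup>2)
     \<longlongrightarrow> (norm (closest_point K z))\<^sup>2) at_top"
proof -
  have K: "K \<noteq> {}" "convex K" using cone by (auto simp: convex_cone_def)
  have inv: "((\<lambda>\<sigma>::real. inverse \<sigma>) \<longlongrightarrow> 0) at_top"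
    by (rule tendsto_inverse_0_at_top[OF filterlim_ident])
  have "((\<lambda>\<sigma>. inverse \<sigma> *\<^sub>R \<theta> + z) \<longlongrightarrow> z) at_top"
    using tendsto_add[OF tendsto_scaleR[OF inv tendsto_const] tendsto_const, of \<theta> z] by simp
  then have "((\<lambda>\<sigma>. closest_point K (inverse \<sigma> *\<^sub>R \<theta> + z)) \<longlongrightarrow> closest_point K z) at_top"
    by (rule isCont_tendsto_compose[OF continuous_at_closest_point[OF K(2) closed K(1)]])
  moreover have "((\<lambda>\<sigma>. inverse \<sigma> *\<^sub>R u) \<longlongrightarrow> 0) at_top"
    using tendsto_scaleR[OF inv tendsto_const, of u] by simp
  ultimately have "((\<lambda>\<sigma>. closest_point K (inverse \<sigma> *\<^sub>R \<theta> + z) - inverse \<sigma> *\<^sub>R u)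
      \<longlongrightarrow> closest_point K z) at_top"
    using tendsto_diff by fastforce
  then have lim: "((\<lambda>\<sigma>. (norm (closest_point K (inverse \<sigma> *\<^sub>R \<theta> + z) - inverse \<sigma> *\<^sub>R u))\<^sup>2)
      \<longlongrightarrow> (norm (closest_point K z))\<^sup>2) at_top"
    by (intro tendsto_intros)
  have "\<forall>\<^sub>F \<sigma> in at_top. (norm (closest_point K (inverse \<sigma> *\<^sub>R \<theta> + z) - inverse \<sigma> *\<^sub>R u))\<^sup>2
      = (norm (closest_point K (\<theta> + \<sigma> *\<^sub>R z) - u))\<^sup>2 / \<sigma>\<^sup>2"
    using eventually_gt_at_top[of 0]
    by eventually_elim (simp add: scaled_residual_closest_point_convex_cone)
  then show ?thesis by (rule Lim_transform_eventually[OF lim])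
qed

end

lemma gauss_expect_closest_point_convex_cone_tendsto:
  fixes K :: "(real^'n) set" and \<theta> u :: "real^'n"
  assumes cone: "convex_cone K" and closed: "closed K"
  shows "((\<lambda>\<sigma>. gauss_expect \<theta> \<sigma> (\<lambda>y. (norm (closest_point K y - u))\<^sup>2) / \<sigma>\<^sup>2)
      \<longlongrightarrow> (\<integral>z. (norm (closest_point K z))\<^sup>2 * std_gauss_density z \<partial>lborel)) at_top"
proof -
  have K: "convex K" "K \<noteq> {}" using cone by (auto simp: convex_cone_def)
  note [measurable] = borel_measurable_closest_point[OF K(1) closed K(2)]
  define c where "c = 2 * (norm \<theta> + norm u)\<^sup>2"
  define w where "w z = (2 * (norm z)\<^sup>2 + c) * std_gauss_density z" for z :: "real^'n"
  have w_int: "integrable lborel w"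
    using has_bochner_integral_std_gauss_norm_sq[where 'n='n] has_bochner_integral_std_gauss_density[where 'n='n]
    unfolding w_def by (auto simp: has_bochner_integral_iff distrib_right mult.assoc)
  have rescale: "gauss_expect \<theta> \<sigma> (\<lambda>y. (norm (closest_point K y - u))\<^sup>2) / \<sigma>\<^sup>2
      = (\<integral>z. (norm (closest_point K (\<theta> + \<sigma> *\<^sub>R z) - u))\<^sup>2 / \<sigma>\<^sup>2 * std_gauss_density z \<partial>lborel)" for \<sigma>
    by (simp add: gauss_expect_def)
  show ?thesis
    unfolding rescale
  proof (rule integral_dominated_convergence_at_top[where w = w])
    show "AE z in lborel. ((\<lambda>\<sigma>. (norm (closest_point K (\<theta> + \<sigma> *\<^sub>R z) - u))\<^sup>2 / \<sigma>\<^sup>2 * std_gauss_density z)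
        \<longlongrightarrow> (norm (closest_point K z))\<^sup>2 * std_gauss_density z) at_top"
      by (intro AE_I2 tendsto_mult_right scaled_residual_closest_point_convex_cone_tendsto[OF cone closed])
    show "\<forall>\<^sub>F \<sigma> in at_top. AE z in lborel.
        norm ((norm (closest_point K (\<theta> + \<sigma> *\<^sub>R z) - u))\<^sup>2 / \<sigma>\<^sup>2 * std_gauss_density z) \<le> w z"
      using eventually_ge_at_top[of 1]
    proof eventually_elim
      case (elim \<sigma>)
      have "(norm (closest_point K (\<theta> + \<sigma> *\<^sub>R z) - u))\<^sup>2 / \<sigma>\<^sup>2 * std_gauss_density z \<le> w z" for z
        unfolding w_def c_def
        by (intro mult_right_mono scaled_residual_closest_point_convex_cone_le[OF cone closed elim]
            std_gauss_density_nonneg)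
      then show ?case by (intro AE_I2) (simp add: abs_of_nonneg std_gauss_density_nonneg)
    qed
  qed (simp_all add: w_int)
qed

lemma convex_cone_nonneg_orthant: "convex_cone nonneg_orthant"
  unfolding convex_cone_iff nonneg_orthant_def by auto

lemma closed_nonneg_orthant: "closed nonneg_orthant"
  unfolding nonneg_orthant_def by (intro closed_Collect_all closed_Collect_le continuous_intros)

lemma closest_point_nonneg_orthant: "closest_point nonneg_orthant z = (\<chi> i. max (z $ i) 0)"
proof (rule closest_point_unique[symmetric])
  show "convex nonneg_orthant" using convex_cone_nonneg_orthant unfolding convex_cone_def by blast
  show "(\<chi> i. max (z $ i) 0) \<in> nonneg_orthant" by (simp add: nonneg_orthant_def)
  show "\<forall>y\<in>nonneg_orthant. dist z (\<chi> i. max (z $ i) 0) \<le> dist z y"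
    unfolding nonneg_orthant_def dist_vec_def
  proof (intro ballI L2_set_mono)
    show "dist (z $ i) ((\<chi> i. max (z $ i) 0) $ i) \<le> dist (z $ i) (y $ i)"
      if "y \<in> {u. \<forall>i. 0 \<le> u $ i}" for y i
      using that[simplified, rule_format, of i] by (simp add: dist_real_def)
  qed simp
qed (rule closed_nonneg_orthant)

lemma has_bochner_integral_std_gauss_closest_point_nonneg_orthant:
  "has_bochner_integral lborel
     (\<lambda>z::real^'n. (norm (closest_point nonneg_orthant z))\<^sup>2 * std_gauss_density z) (real CARD('n) / 2)"
proof -
  have norm_sq: "(norm (closest_point nonneg_orthant z))\<^sup>2 = (\<Sum>i\<in>UNIV. (max (z $ i) 0)\<^sup>2)" for z :: "real^'n"
    unfolding power2_norm_eq_inner by (simp add: closest_point_nonneg_orthant inner_vec_def power2_eq_square)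
  have "has_bochner_integral lborel (\<lambda>z::real^'n. \<Sum>i\<in>UNIV. (max (z \<bullet> axis i 1) 0)\<^sup>2 * std_gauss_density z)
      (\<Sum>i\<in>(UNIV::'n set). 1/2)"
    by (intro has_bochner_integral_sum has_bochner_integral_std_gauss_coordinate
        has_bochner_integral_std_normal_positive_part_sq) auto
  then show ?thesis by (simp add: norm_sq sum_distrib_right cart_eq_inner_axis)
qed

lemma zero_in_tangent_cone: "\<theta> \<in> C \<Longrightarrow> 0 \<in> tangent_cone C \<theta>"
  unfolding tangent_cone_def
  by (rule subsetD[OF closure_subset]) (auto intro!: exI[of _ 0] exI[of _ \<theta>])

lemma tangent_cone_subset_halfspace:
  assumes "\<theta> \<in> C" and max: "\<And>y. y \<in> C \<Longrightarrow> v \<bullet> y \<le> v \<bullet> \<theta>"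
  shows "tangent_cone C \<theta> \<subseteq> {x. v \<bullet> x \<le> 0}"
  unfolding tangent_cone_def
proof (rule closure_minimal[OF _ closed_halfspace_le])
  show "{\<alpha> *\<^sub>R (\<theta>' - \<theta>) | \<alpha> \<theta>'. \<alpha> \<ge> 0 \<and> \<theta>' \<in> C} \<subseteq> {x. v \<bullet> x \<le> 0}"
    using max by (auto simp: inner_diff_right mult_nonneg_nonpos)
qed

lemma core_cone_eq_0_if_bounded:
  assumes "C \<noteq> {}" and "closed C" and "bounded C"
  shows "core_cone C = {0}"
proof
  show "{0} \<subseteq> core_cone C" unfolding core_cone_def using zero_in_tangent_cone by auto
  show "core_cone C \<subseteq> {0}"
  proof
    fix v assume v: "v \<in> core_cone C"
    have "compact C" using assms by (simp add: compact_eq_bounded_closed)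
    moreover have "continuous_on C (\<lambda>x. v \<bullet> x)" by (intro continuous_intros)
    ultimately obtain \<theta> where \<theta>: "\<theta> \<in> C" and max: "\<forall>y\<in>C. v \<bullet> y \<le> v \<bullet> \<theta>"
      using continuous_attains_sup[of C "\<lambda>x. v \<bullet> x"] assms(1) by auto
    have "v \<in> tangent_cone C \<theta>" using v \<theta> by (auto simp: core_cone_def)
    then have "v \<bullet> v \<le> 0" using tangent_cone_subset_halfspace[OF \<theta>] max by blast
    then have "v \<bullet> v = 0" using inner_ge_zero[of v] by linarith
    then show "v \<in> {0}" by simp
  qed
qed

lemma limit_direction_in_tangent_cone:
  assumes "\<And>k. x k \<in> C" and "\<theta> \<in> C"
    and norm_x: "filterlim (\<lambda>k. norm (x k)) at_top sequentially"
    and direction: "(\<lambda>k. inverse (norm (x k)) *\<^sub>R x k) \<longlonglongrightarrow> d"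
  shows "d \<in> tangent_cone C \<theta>"
  unfolding tangent_cone_def closure_sequential
proof (intro exI conjI allI)
  show "inverse (norm (x k)) *\<^sub>R (x k - \<theta>) \<in> {\<alpha> *\<^sub>R (\<theta>' - \<theta>) | \<alpha> \<theta>'. \<alpha> \<ge> 0 \<and> \<theta>' \<in> C}" for k
    using assms(1)[of k]
    by (intro CollectI exI[of _ "inverse (norm (x k))"] exI[of _ "x k"]) auto
  have "(\<lambda>k. inverse (norm (x k)) *\<^sub>R \<theta>) \<longlonglongrightarrow> 0"
    using tendsto_scaleR[OF tendsto_inverse_0_at_top[OF norm_x] tendsto_const, of \<theta>] by simp
  from tendsto_diff[OF direction this]
  show "(\<lambda>k. inverse (norm (x k)) *\<^sub>R (x k - \<theta>)) \<longlonglongrightarrow> d"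
    by (simp add: scaleR_right_diff_distrib)
qed

lemma core_cone_nonzero_if_unbounded:
  assumes "\<not> bounded C"
  shows "\<exists>d. d \<noteq> 0 \<and> d \<in> core_cone C"
proof -
  have "\<forall>n::nat. \<exists>x\<in>C. real n < norm x"
    using assms unfolding bounded_iff by (meson not_le)
  then obtain x where x: "\<And>n. x n \<in> C" and x_large: "\<And>n. real n < norm (x n)"
    by metis
  have "0 < norm (x n)" for n
    using x_large[of n] of_nat_0_le_iff[of n] by linarith
  then have "inverse (norm (x n)) *\<^sub>R x n \<in> sphere 0 1" for n
    by (simp add: field_simps)
  then obtain d r where d: "d \<in> sphere 0 1" and r: "strict_mono r"
    and direction: "((\<lambda>n. inverse (norm (x n)) *\<^sub>R x n) \<circ> r) \<longlonglongrightarrow> d"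
    by (rule seq_compactE[OF compact_imp_seq_compact[OF compact_sphere] allI])
  have "filterlim (\<lambda>k. norm (x (r k))) at_top sequentially"
  proof (rule filterlim_at_top_mono[OF filterlim_real_sequentially always_eventually])
    show "\<forall>k. real k \<le> norm (x (r k))"
      using seq_suble[OF r] x_large by (meson less_imp_le of_nat_le_iff order_trans)
  qed
  then have "d \<in> tangent_cone C \<theta>" if "\<theta> \<in> C" for \<theta>
    using limit_direction_in_tangent_cone[OF x that _ direction[unfolded o_def]] by blast
  moreover have "d \<noteq> 0" using d by auto
  ultimately show ?thesis by (auto simp: core_cone_def)
qed

lemma core_cone_eq_0_iff_bounded:
  assumes "C \<noteq> {}" "closed C"
  shows "core_cone C = {0} \<longleftrightarrow> bounded C"
  using core_cone_eq_0_if_bounded[OF assms] core_cone_nonzero_if_unbounded[of C] by auto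

theorem corollary3:
  fixes \<theta>s :: "real ^ 'n"
  shows "((\<lambda>\<sigma>. misspec_risk nonneg_orthant \<theta>s \<sigma> / \<sigma>\<^sup>2) \<longlongrightarrow> real CARD('n) / 2) at_top
       \<and> ((\<lambda>\<sigma>. excess_risk nonneg_orthant \<theta>s \<sigma> / \<sigma>\<^sup>2) \<longlongrightarrow> real CARD('n) / 2) at_top
       \<and> (\<forall>C :: (real ^ 'n) set. C \<noteq> {} \<and> closed C \<and> convex C \<longrightarrow>
            (core_cone C = {0} \<longleftrightarrow> bounded C)
          \<and> (bounded C \<longrightarrow>
               ((\<lambda>\<sigma>. misspec_risk C \<theta>s \<sigma> / \<sigma>\<^sup>2) \<longlongrightarrow> 0) at_top
             \<and> ((\<lambda>\<sigma>. excess_risk C \<theta>s \<sigma> / \<sigma>\<^sup>2) \<longlongrightarrow> 0) at_top))"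
proof (intro conjI allI impI)
  note orthant_limit = gauss_expect_closest_point_convex_cone_tendsto[OF
      convex_cone_nonneg_orthant closed_nonneg_orthant, of \<theta>s, unfolded
      has_bochner_integral_integral_eq[OF has_bochner_integral_std_gauss_closest_point_nonneg_orthant]]
  show "((\<lambda>\<sigma>. misspec_risk nonneg_orthant \<theta>s \<sigma> / \<sigma>\<^sup>2) \<longlongrightarrow> real CARD('n) / 2) at_top"
    unfolding misspec_risk_def by (rule orthant_limit)
  show "((\<lambda>\<sigma>. excess_risk nonneg_orthant \<theta>s \<sigma> / \<sigma>\<^sup>2) \<longlongrightarrow> real CARD('n) / 2) at_top"
    unfolding excess_risk_def diff_divide_distrib
    using tendsto_diff[OF orthant_limit tendsto_divide_power2_at_top] by simp
next
  fix C :: "(real ^ 'n) set"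
  assume C: "C \<noteq> {} \<and> closed C \<and> convex C"
  then have C_ne: "C \<noteq> {}" and C_closed: "closed C" and C_convex: "convex C" by auto
  show "core_cone C = {0} \<longleftrightarrow> bounded C" by (rule core_cone_eq_0_iff_bounded[OF C_ne C_closed])
  note [measurable] = borel_measurable_closest_point[OF C_convex C_closed C_ne]
  assume "bounded C"
  then obtain B where B: "\<And>x. x \<in> C \<Longrightarrow> norm x \<le> B" unfolding bounded_iff by auto
  have risk_bound: "\<bar>(norm (closest_point C y - a))\<^sup>2\<bar> \<le> (B + norm a)\<^sup>2" for y a
  proof -
    have "norm (closest_point C y - a) \<le> B + norm a"
      using B[OF closest_point_in_set[OF C_closed C_ne, of y]] norm_triangle_ineq4[of "closest_point C y" a]
      by linarith
    then show ?thesis by (simp add: power_mono)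
  qed
  have risk_tendsto: "((\<lambda>\<sigma>. gauss_expect \<theta>s \<sigma> (\<lambda>y. (norm (closest_point C y - a))\<^sup>2) / \<sigma>\<^sup>2) \<longlongrightarrow> 0) at_top"
    for a
    by (rule gauss_expect_bounded_divide_power2_tendsto_0[OF _ risk_bound]) measurable
  show "((\<lambda>\<sigma>. misspec_risk C \<theta>s \<sigma> / \<sigma>\<^sup>2) \<longlongrightarrow> 0) at_top"
    unfolding misspec_risk_def by (rule risk_tendsto)
  show "((\<lambda>\<sigma>. excess_risk C \<theta>s \<sigma> / \<sigma>\<^sup>2) \<longlongrightarrow> 0) at_top"
    unfolding excess_risk_def diff_divide_distrib
    using tendsto_diff[OF risk_tendsto tendsto_divide_power2_at_top] by simp
qed

end
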